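(* Let $H$ be the orthocenter of $T=P_1P_2P_3$. For each $i$, with $\{i,j,k\}=\{1,2,3\}$: the perpendicular from $P_i$ to the line $P_j'P_k'$ passes through $-M$ (the reflection of $M$ in $O$), and the perpendicular from $P_i'$ to the line $P_jP_k$ passes through $2H-M$ (the reflection of $M$ in $H$). Hence $T$ and $T'=P_1'P_2'P_3'$ are orthologic with orthology centers $-M$ and $2H-M$.
   Context: Let $a>b>0$ and $c>0$ with $c^2=a^2-b^2$. Let $\mathcal{E}$ be the ellipse $x^2/a^2+y^2/b^2=1$ with center $O=(0,0)$, parametrized by $P(t)=(a\cos t,b\sin t)$. Fix $u\in\mathbb{R}$, let $M=(a\cos u,b\sin u)$ and $\Delta_u(t)=(x_u(t),y_u(t))$, where $x_u(t)=\frac1a\big(c^2(1+\cos(t+u))\cos t-a^2\cos u\big)$ and $y_u(t)=\frac1b\big(c^2\cos t\sin(t+u)-c^2\sin t-a^2\sin u\big)$ (the negative pedal curve of $\mathcal{E}$ with respect to $M$). For $i=1,2,3$ let $t_i=-u/3-2\pi(i-1)/3$, $P_i=P(t_i)$, $P_i'=\Delta_u(t_i)$ (the cusps). Two triangles $ABC$, $DEF$ are orthologic if the perpendiculars from $A,B,C$ to $EF,FD,DE$ respectively are concurrent; the concurrence points of these perpendiculars and of the perpendiculars from $D,E,F$ to $BC,CA,AB$ are the orthology centers. *)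

theory Defs
  imports Complex_Main
begin

type_synonym pt = "real \<times> real"

definition dotp :: "pt \<Rightarrow> pt \<Rightarrow> real" where
  "dotp p q = fst p * fst q + snd p * snd q"

definition psub :: "pt \<Rightarrow> pt \<Rightarrow> pt" where
  "psub p q = (fst p - fst q, snd p - snd q)"

definition on_perp :: "pt \<Rightarrow> pt \<Rightarrow> pt \<Rightarrow> pt \<Rightarrow> bool" where
  "on_perp Q A B C \<longleftrightarrow> dotp (psub Q A) (psub C B) = 0"

definition is_orthocenter :: "pt \<Rightarrow> pt \<Rightarrow> pt \<Rightarrow> pt \<Rightarrow> bool" where
  "is_orthocenter H A B C \<longleftrightarrow> on_perp H A B C \<and> on_perp H B C A \<and> on_perp H C A B"

definition orthology_center :: "pt \<Rightarrow> pt \<Rightarrow> pt \<Rightarrow> pt \<Rightarrow> pt \<Rightarrow> pt \<Rightarrow> pt \<Rightarrow> bool" where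
  "orthology_center Q A B C D E F \<longleftrightarrow> on_perp Q A E F \<and> on_perp Q B F D \<and> on_perp Q C D E"

definition orthologic :: "pt \<Rightarrow> pt \<Rightarrow> pt \<Rightarrow> pt \<Rightarrow> pt \<Rightarrow> pt \<Rightarrow> bool" where
  "orthologic A B C D E F \<longleftrightarrow> (\<exists>Q. orthology_center Q A B C D E F)"

definition ellP :: "real \<Rightarrow> real \<Rightarrow> real \<Rightarrow> pt" where
  "ellP a b t = (a * cos t, b * sin t)"

definition negpedal :: "real \<Rightarrow> real \<Rightarrow> real \<Rightarrow> real \<Rightarrow> real \<Rightarrow> pt" where
  "negpedal a b c u t =
     ((c^2 * (1 + cos (t + u)) * cos t - a^2 * cos u) / a,
      (c^2 * cos t * sin (t + u) - c^2 * sin t - a^2 * sin u) / b)"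

definition cusp_param :: "real \<Rightarrow> nat \<Rightarrow> real" where
  "cusp_param u i = - u / 3 - 2 * pi * (real i - 1) / 3"

end

theory Submission
  imports Defs
begin

text \<open>
  At a cusp parameter t we have 3t \<equiv> -u (mod 2\<pi>), so \<Delta>_u(t) can be written through
  cos t, sin t, cos 3t, sin 3t only, and the three cusp parameters differ by 2\<pi>/3.  The terms
  in 3t are common to all three cusps, hence the side P_j'P_k' of T' opposite to t
  is parallel to (sin t / a, cos t / b), while P_jP_k is parallel to the tangent
  (-a sin t, b cos t) of the ellipse at P(t).  Both perpendicularity claims then reduce to
  sin 3t cos t - cos 3t sin t = sin 2t.  Finally, moving the centre of a perpendicular from
  2P_i - M to 2H - M is a translation along the altitude of T through P_i, which is
  orthogonal to P_jP_k.
\<close>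

lemma sin_treble_sin: "sin (3 * x) = 3 * sin x - 4 * sin (x::real) ^ 3"
proof -
  have "sin (3 * x) = sin (2 * x + x)" by simp
  also have "\<dots> = 3 * sin x - 4 * sin x ^ 3"
    unfolding sin_add sin_double cos_double using sin_cos_squared_add[of x] by algebra
  finally show ?thesis .
qed

lemma cos_sin_triple_third_shift:
  "cos (3 * (t + 2 * pi / 3)) = cos (3 * t)" "cos (3 * (t - 2 * pi / 3)) = cos (3 * t)"
  "sin (3 * (t + 2 * pi / 3)) = sin (3 * t)" "sin (3 * (t - 2 * pi / 3)) = sin (3 * t)"
proof -
  have "3 * (t + 2 * pi / 3) = 3 * t + 2 * pi" "3 * (t - 2 * pi / 3) + 2 * pi = 3 * t" by simp_all
  then show "cos (3 * (t + 2 * pi / 3)) = cos (3 * t)" "cos (3 * (t - 2 * pi / 3)) = cos (3 * t)"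
    "sin (3 * (t + 2 * pi / 3)) = sin (3 * t)" "sin (3 * (t - 2 * pi / 3)) = sin (3 * t)"
    by (metis cos_periodic sin_periodic)+
qed

lemma cos_sin_third_chord:
  "cos (t + 2 * pi / 3) - cos (t - 2 * pi / 3) = - sqrt 3 * sin t"
  "sin (t + 2 * pi / 3) - sin (t - 2 * pi / 3) = sqrt 3 * cos t"
  by (simp_all add: cos_add cos_diff sin_add sin_diff sin_120)

lemma sin_treble_cos_diff: "sin (3 * t) * cos t - cos (3 * t) * sin t = 2 * sin t * cos (t::real)"
  using sin_diff[of "3 * t" t] sin_double[of t] by simp

definition cusp_point :: "real \<Rightarrow> real \<Rightarrow> real \<Rightarrow> pt" where
  "cusp_point a b t =
     ((3 * (a\<^sup>2 - b\<^sup>2) * cos t - (a\<^sup>2 + b\<^sup>2) * cos (3 * t)) / (2 * a),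
      ((a\<^sup>2 + b\<^sup>2) * sin (3 * t) - 3 * (a\<^sup>2 - b\<^sup>2) * sin t) / (2 * b))"

lemma negpedal_eq_cusp_point:
  assumes "c\<^sup>2 = a\<^sup>2 - b\<^sup>2" "cos u = cos (3 * t)" "sin u = - sin (3 * t)"
  shows "negpedal a b c u t = cusp_point a b t"
proof -
  have "cos (t + u) = cos (2 * t)" "sin (t + u) = - sin (2 * t)"
    using assms(2,3) cos_diff[of "3 * t" t] sin_diff[of "3 * t" t]
    by (simp_all add: cos_add sin_add algebra_simps)
  then have numerators: "c\<^sup>2 * (1 + cos (t + u)) * cos t - a\<^sup>2 * cos u
      = (3 * (a\<^sup>2 - b\<^sup>2) * cos t - (a\<^sup>2 + b\<^sup>2) * cos (3 * t)) / 2"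
    "c\<^sup>2 * cos t * sin (t + u) - c\<^sup>2 * sin t - a\<^sup>2 * sin u
      = ((a\<^sup>2 + b\<^sup>2) * sin (3 * t) - 3 * (a\<^sup>2 - b\<^sup>2) * sin t) / 2"
    unfolding assms cos_treble_cos sin_treble_sin cos_double_cos sin_double
    by (simp_all add: cos_squared_eq field_simps, algebra+)
  then show ?thesis
    unfolding negpedal_def cusp_point_def by (simp only: numerators divide_divide_eq_left)
qed

lemma ellP_chord:
  "psub (ellP a b (t + 2 * pi / 3)) (ellP a b (t - 2 * pi / 3))
     = (- sqrt 3 * a * sin t, sqrt 3 * b * cos t)"
  using cos_sin_third_chord[of t]
  unfolding psub_def ellP_def by (simp add: right_diff_distrib[symmetric])

lemma cusp_point_chord:
  "psub (cusp_point a b (t + 2 * pi / 3)) (cusp_point a b (t - 2 * pi / 3))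
     = (- 3 * sqrt 3 * (a\<^sup>2 - b\<^sup>2) / (2 * a) * sin t,
        - 3 * sqrt 3 * (a\<^sup>2 - b\<^sup>2) / (2 * b) * cos t)"
proof -
  have linear: "(k * x - z) / d - (k * y - z) / d = k * (x - y) / d" for k x y z d :: real
    by (simp add: diff_divide_distrib right_diff_distrib)
  have linear': "(z - k * x) / d - (z - k * y) / d = - k * (x - y) / d" for k x y z d :: real
    by (simp add: diff_divide_distrib right_diff_distrib)
  show ?thesis
    unfolding psub_def cusp_point_def fst_conv snd_conv cos_sin_triple_third_shift linear linear'
      cos_sin_third_chord
    by (simp add: algebra_simps)
qed

lemma on_perp_antipode_cusp_chord:
  assumes "a \<noteq> 0" "b \<noteq> 0" "cos u = cos (3 * t)" "sin u = - sin (3 * t)"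
  shows "on_perp (- fst (ellP a b u), - snd (ellP a b u))
           (ellP a b t) (cusp_point a b (t - 2 * pi / 3)) (cusp_point a b (t + 2 * pi / 3))"
  unfolding on_perp_def cusp_point_chord
  using assms sin_treble_cos_diff[of t]
  by (simp add: dotp_def psub_def ellP_def field_simps) algebra

lemma on_perp_reflection_ellP_chord:
  assumes "a \<noteq> 0" "b \<noteq> 0" "cos u = cos (3 * t)" "sin u = - sin (3 * t)"
  shows "on_perp (2 * fst (ellP a b t) - fst (ellP a b u), 2 * snd (ellP a b t) - snd (ellP a b u))
           (cusp_point a b t) (ellP a b (t - 2 * pi / 3)) (ellP a b (t + 2 * pi / 3))"
  unfolding on_perp_def ellP_chord
  using assms sin_treble_cos_diff[of t]
  by (simp add: dotp_def psub_def ellP_def cusp_point_def field_simps) algebra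

lemma on_perp_swap: "on_perp Q A C B \<longleftrightarrow> on_perp Q A B C"
  unfolding on_perp_def dotp_def psub_def by (simp add: algebra_simps) argo

lemma on_perp_reflection_along_altitude:
  assumes "on_perp H A B C" "on_perp (2 * fst A - fst M, 2 * snd A - snd M) D B C"
  shows "on_perp (2 * fst H - fst M, 2 * snd H - snd M) D B C"
  using assms unfolding on_perp_def dotp_def psub_def by (simp add: algebra_simps)

lemma cos_sin_triple_cusp_param:
  assumes "i \<ge> 1"
  shows "cos u = cos (3 * cusp_param u i)" "sin u = - sin (3 * cusp_param u i)"
proof -
  have "3 * cusp_param u i = - u - 2 * real (i - 1) * pi"
    using assms unfolding cusp_param_def by (simp add: of_nat_diff field_simps)
  then show "cos u = cos (3 * cusp_param u i)" "sin u = - sin (3 * cusp_param u i)"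
    by (simp_all add: cos_diff sin_diff)
qed

lemma periodic_at_cusp_param_neighbours:
  assumes periodic: "\<And>x. f (x + 2 * pi) = f x"
    and ijk: "(i, j, k) \<in> {(1, 2, 3), (2, 3, 1), (3, 1, 2)}"
  shows "f (cusp_param u j) = f (cusp_param u i - 2 * pi / 3)"
    "f (cusp_param u k) = f (cusp_param u i + 2 * pi / 3)"
proof -
  have "cusp_param u j = cusp_param u i - 2 * pi / 3
      \<or> cusp_param u j = (cusp_param u i - 2 * pi / 3) + 2 * pi"
    "cusp_param u k = cusp_param u i + 2 * pi / 3
      \<or> cusp_param u k + 2 * pi = cusp_param u i + 2 * pi / 3"
    using ijk unfolding cusp_param_def by (auto simp: field_simps)
  then show "f (cusp_param u j) = f (cusp_param u i - 2 * pi / 3)"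
    "f (cusp_param u k) = f (cusp_param u i + 2 * pi / 3)"
    using periodic by metis+
qed

lemma cusp_point_periodic: "cusp_point a b (t + 2 * pi) = cusp_point a b t"
proof -
  have "3 * (t + 2 * pi) = ((3 * t + 2 * pi) + 2 * pi) + 2 * pi" by simp
  then show ?thesis by (simp only: cusp_point_def cos_periodic sin_periodic)
qed

lemma ellP_periodic: "ellP a b (t + 2 * pi) = ellP a b t"
  unfolding ellP_def by simp

lemma cusp_triangle_perpendiculars:
  assumes "c\<^sup>2 = a\<^sup>2 - b\<^sup>2" "a \<noteq> 0" "b \<noteq> 0"
    and ijk: "(i, j, k) \<in> {(1, 2, 3), (2, 3, 1), (3, 1, 2)}"
  shows "on_perp (- fst (ellP a b u), - snd (ellP a b u)) (ellP a b (cusp_param u i))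
           (negpedal a b c u (cusp_param u j)) (negpedal a b c u (cusp_param u k))"
    "on_perp (2 * fst (ellP a b (cusp_param u i)) - fst (ellP a b u),
              2 * snd (ellP a b (cusp_param u i)) - snd (ellP a b u))
           (negpedal a b c u (cusp_param u i)) (ellP a b (cusp_param u j)) (ellP a b (cusp_param u k))"
proof -
  have negpedal_cusp: "negpedal a b c u (cusp_param u n) = cusp_point a b (cusp_param u n)"
    if "n \<ge> 1" for n
    using negpedal_eq_cusp_point[OF assms(1) cos_sin_triple_cusp_param[OF that]] .
  have "i \<ge> 1" "j \<ge> 1" "k \<ge> 1" using ijk by auto
  note cusps = negpedal_cusp[OF this(1)] negpedal_cusp[OF this(2)] negpedal_cusp[OF this(3)]
    and neighbours =
      periodic_at_cusp_param_neighbours[where f = "cusp_point a b", OF cusp_point_periodic ijk]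
      periodic_at_cusp_param_neighbours[where f = "ellP a b", OF ellP_periodic ijk]
    and triple = cos_sin_triple_cusp_param[OF \<open>i \<ge> 1\<close>]
  show "on_perp (- fst (ellP a b u), - snd (ellP a b u)) (ellP a b (cusp_param u i))
          (negpedal a b c u (cusp_param u j)) (negpedal a b c u (cusp_param u k))"
    unfolding cusps neighbours using on_perp_antipode_cusp_chord[OF assms(2,3) triple] .
  show "on_perp (2 * fst (ellP a b (cusp_param u i)) - fst (ellP a b u),
              2 * snd (ellP a b (cusp_param u i)) - snd (ellP a b u))
          (negpedal a b c u (cusp_param u i)) (ellP a b (cusp_param u j)) (ellP a b (cusp_param u k))"
    unfolding cusps neighbours using on_perp_reflection_ellP_chord[OF assms(2,3) triple] .
qed

lemma permutation_123_cyclic_cases: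
  assumes "{i, j, k} = {1, 2, 3 :: nat}"
  shows "(i, j, k) \<in> {(1, 2, 3), (2, 3, 1), (3, 1, 2)} \<or> (i, k, j) \<in> {(1, 2, 3), (2, 3, 1), (3, 1, 2)}"
proof -
  have "i = 1 \<or> i = 2 \<or> i = 3" "j = 1 \<or> j = 2 \<or> j = 3" "k = 1 \<or> k = 2 \<or> k = 3"
    using assms by blast+
  moreover have "1 \<in> {i, j, k}" "2 \<in> {i, j, k}" "3 \<in> {i, j, k}"
    using assms by blast+
  ultimately show ?thesis by (elim disjE) simp_all
qed

theorem theorem8p1:
  fixes a b c u :: real and H :: pt
  assumes "a > b" "b > 0" "c > 0" "c^2 = a^2 - b^2"
    and "is_orthocenter H (ellP a b (cusp_param u 1)) (ellP a b (cusp_param u 2))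
           (ellP a b (cusp_param u 3))"
  shows "(\<forall>i j k. {i, j, k} = {1, 2, 3::nat} \<longrightarrow>
            on_perp (- fst (ellP a b u), - snd (ellP a b u))
              (ellP a b (cusp_param u i))
              (negpedal a b c u (cusp_param u j)) (negpedal a b c u (cusp_param u k))
          \<and> on_perp (2 * fst H - fst (ellP a b u), 2 * snd H - snd (ellP a b u))
              (negpedal a b c u (cusp_param u i))
              (ellP a b (cusp_param u j)) (ellP a b (cusp_param u k)))
       \<and> orthologic (ellP a b (cusp_param u 1)) (ellP a b (cusp_param u 2)) (ellP a b (cusp_param u 3))
           (negpedal a b c u (cusp_param u 1)) (negpedal a b c u (cusp_param u 2)) (negpedal a b c u (cusp_param u 3))
       \<and> orthology_center (- fst (ellP a b u), - snd (ellP a b u))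
           (ellP a b (cusp_param u 1)) (ellP a b (cusp_param u 2)) (ellP a b (cusp_param u 3))
           (negpedal a b c u (cusp_param u 1)) (negpedal a b c u (cusp_param u 2)) (negpedal a b c u (cusp_param u 3))
       \<and> orthology_center (2 * fst H - fst (ellP a b u), 2 * snd H - snd (ellP a b u))
           (negpedal a b c u (cusp_param u 1)) (negpedal a b c u (cusp_param u 2)) (negpedal a b c u (cusp_param u 3))
           (ellP a b (cusp_param u 1)) (ellP a b (cusp_param u 2)) (ellP a b (cusp_param u 3))"
proof -
  let ?M = "ellP a b u" and ?P = "\<lambda>n. ellP a b (cusp_param u n)"
    and ?D = "\<lambda>n. negpedal a b c u (cusp_param u n)"
  have ab: "a \<noteq> 0" "b \<noteq> 0" using assms(1,2) by auto
  have cyclic: "on_perp (- fst ?M, - snd ?M) (?P i) (?D j) (?D k)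
      \<and> on_perp (2 * fst H - fst ?M, 2 * snd H - snd ?M) (?D i) (?P j) (?P k)"
    if ijk: "(i, j, k) \<in> {(1, 2, 3), (2, 3, 1), (3, 1, 2)}" for i j k
  proof
    show "on_perp (- fst ?M, - snd ?M) (?P i) (?D j) (?D k)"
      using cusp_triangle_perpendiculars(1)[OF assms(4) ab ijk] .
    have "on_perp H (?P i) (?P j) (?P k)"
      using assms(5) ijk unfolding is_orthocenter_def by auto
    then show "on_perp (2 * fst H - fst ?M, 2 * snd H - snd ?M) (?D i) (?P j) (?P k)"
      using on_perp_reflection_along_altitude cusp_triangle_perpendiculars(2)[OF assms(4) ab ijk]
      by blast
  qed
  have all: "on_perp (- fst ?M, - snd ?M) (?P i) (?D j) (?D k)
      \<and> on_perp (2 * fst H - fst ?M, 2 * snd H - snd ?M) (?D i) (?P j) (?P k)"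
    if "{i, j, k} = {1, 2, 3::nat}" for i j k
    using permutation_123_cyclic_cases[OF that] cyclic[of i j k] cyclic[of i k j] on_perp_swap
    by blast
  have "{1, 2, 3} = {2, 3, 1::nat}" "{1, 2, 3} = {3, 1, 2::nat}" by auto
  then show ?thesis
    unfolding orthologic_def orthology_center_def
    using all all[of 1 2 3] all[of 2 3 1] all[of 3 1 2] by blast
qed

end
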